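(* For integers $2\leq n\leq\ell$ and $1\leq k\leq n-1$, let $\mathcal{S}_\ell(n,k)$ denote the set of permutations of $[\ell]$ with exactly $\ell-n$ fixed points and exactly $k$ exceedances. Then $|\mathcal{S}_\ell(n,k)|\leq\binom{\ell}{n}\cdot\theta(n,k)$, where \[\theta(n,k)=\begin{cases}1&\text{if }k=1\text{ or }k=n-1,\\ (2k+3)^n&\text{if }2\leq k<n/2,\\ (2n-2k+5)^n&\text{if }n/2\leq k\leq n-2.\end{cases}\]
   Context: A fixed point of a permutation $\sigma$ of $[\ell]$ is an $i$ with $\sigma(i)=i$; an exceedance is an index $i$ with $\sigma(i)>i$, and the number of exceedances of $\sigma$ is $|\{i:\sigma(i)>i\}|$. *)

theory Defs
  imports "HOL-Combinatorics.Permutations"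
begin

definition fixed_points :: "(nat \<Rightarrow> nat) \<Rightarrow> nat \<Rightarrow> nat set" where
  "fixed_points \<sigma> l = {i \<in> {1..l}. \<sigma> i = i}"

definition exceedances :: "(nat \<Rightarrow> nat) \<Rightarrow> nat \<Rightarrow> nat set" where
  "exceedances \<sigma> l = {i \<in> {1..l}. \<sigma> i > i}"

definition S_set :: "nat \<Rightarrow> nat \<Rightarrow> nat \<Rightarrow> (nat \<Rightarrow> nat) set" where
  "S_set l n k = {\<sigma>. \<sigma> permutes {1..l} \<and> card (fixed_points \<sigma> l) = l - n
                     \<and> card (exceedances \<sigma> l) = k}"

definition theta :: "nat \<Rightarrow> nat \<Rightarrow> nat" where
  "theta n k = (if k = 1 \<or> k = n - 1 then 1
               else if 2 \<le> k \<and> 2 * k < n then (2 * k + 3) ^ n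
               else (2 * n - 2 * k + 5) ^ n)"

end

theory Submission
  imports Defs
begin

text \<open>Count permutations of \<open>[l]\<close> by the number \<open>n\<close> of moved points and \<open>k\<close> of exceedances.
  A permutation of \<open>[l+1]\<close> either fixes \<open>l+1\<close> or arises from a permutation \<open>p\<close> of \<open>[l]\<close> by
  inserting \<open>l+1\<close> into a cycle right after some \<open>j\<close>; this creates the exceedance \<open>j\<close> and
  moves \<open>l+1\<close>, and changes the counts according to whether \<open>j\<close> was an exceedance, a moved
  non-exceedance or a fixed point of \<open>p\<close>. This gives a linear recurrence in \<open>l\<close>. Both
  \<open>(2k+3)^n\<close> and \<open>(2(n-k)+5)^n\<close> are supersolutions of its normalised form, by Bernoulli's
  inequality, hence so is their minimum, and induction on \<open>l\<close> bounds the count by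
  \<open>(l choose n)\<close> times that minimum.\<close>

definition moved_points :: "(nat \<Rightarrow> nat) \<Rightarrow> nat \<Rightarrow> nat set" where
  "moved_points s l = {i \<in> {1..l}. s i \<noteq> i}"

definition perms_moved_exc :: "nat \<Rightarrow> nat \<Rightarrow> nat \<Rightarrow> (nat \<Rightarrow> nat) set" where
  "perms_moved_exc l n k =
     {s. s permutes {1..l} \<and> card (moved_points s l) = n \<and> card (exceedances s l) = k}"

lemma finite_perms_moved_exc: "finite (perms_moved_exc l n k)"
  by (rule finite_subset[OF _ finite_permutations[of "{1..l}"]]) (auto simp: perms_moved_exc_def)

lemma finite_moved_points [simp]: "finite (moved_points s l)"
  by (simp add: moved_points_def)

lemma finite_exceedances [simp]: "finite (exceedances s l)"
  by (simp add: exceedances_def)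

lemma finite_fixed_points [simp]: "finite (fixed_points s l)"
  by (simp add: fixed_points_def)

lemma exceedances_subset_moved_points: "exceedances s l \<subseteq> moved_points s l"
  by (auto simp: exceedances_def moved_points_def)

lemma card_fixed_points: "card (fixed_points s l) = l - card (moved_points s l)"
proof -
  have "fixed_points s l = {1..l} - moved_points s l" "moved_points s l \<subseteq> {1..l}"
    by (auto simp: fixed_points_def moved_points_def)
  then show ?thesis by (simp add: card_Diff_subset finite_subset)
qed

lemma
  assumes "s (Suc l) = Suc l"
  shows moved_points_Suc_fixed: "moved_points s (Suc l) = moved_points s l"
    and exceedances_Suc_fixed: "exceedances s (Suc l) = exceedances s l"
  using assms by (auto simp: moved_points_def exceedances_def le_Suc_eq)

text \<open>\<open>p \<circ> transpose j (l+1)\<close> inserts \<open>l+1\<close> into the cycle of \<open>p\<close> right after \<open>j\<close>.\<close>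

lemma
  assumes "p permutes {1..l}" and "j \<in> {1..l}"
  shows moved_points_insert_after:
      "moved_points (p \<circ> transpose j (Suc l)) (Suc l) = insert (Suc l) (insert j (moved_points p l))"
    and exceedances_insert_after:
      "exceedances (p \<circ> transpose j (Suc l)) (Suc l) = insert j (exceedances p l)"
  using assms(2) permutes_not_in[OF assms(1), of "Suc l"] permutes_in_image[OF assms(1), of j]
  by (auto simp: moved_points_def exceedances_def transpose_def le_Suc_eq)

lemma perm_decompose_last:
  assumes "s permutes {1..Suc l}" and "s (Suc l) \<noteq> Suc l"
  obtains p j where "p permutes {1..l}" "j \<in> {1..l}" "s = p \<circ> transpose j (Suc l)"
proof -
  define j where "j = inv s (Suc l)"
  have sj: "s j = Suc l" using permutes_inverses(1)[OF assms(1)] by (simp add: j_def)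
  have "j \<in> {1..Suc l}" using permutes_not_in[OF assms(1)] sj by fastforce
  moreover have "j \<noteq> Suc l" using sj assms(2) by auto
  ultimately have j: "j \<in> {1..l}" by auto
  define p where "p = s \<circ> transpose j (Suc l)"
  have "p permutes {1..Suc l}" unfolding p_def
    by (rule permutes_compose[OF permutes_swap_id assms(1)]) (use j in auto)
  moreover have "p (Suc l) = Suc l" by (simp add: p_def sj)
  ultimately have "p permutes {1..l}"
    using permutes_superset by (metis Diff_iff atLeastAtMost_iff le_Suc_eq)
  moreover have "s = p \<circ> transpose j (Suc l)" by (simp add: p_def comp_assoc)
  ultimately show thesis using j that by blast
qed

lemma card_insert_after:
  assumes "p permutes {1..l}" and "j \<in> {1..l}"
  shows "card (moved_points (p \<circ> transpose j (Suc l)) (Suc l))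
           = card (moved_points p l) + (if j \<in> moved_points p l then 1 else 2)"
    and "card (exceedances (p \<circ> transpose j (Suc l)) (Suc l))
           = card (exceedances p l) + (if j \<in> exceedances p l then 0 else 1)"
  using assms
  by (simp_all add: moved_points_insert_after exceedances_insert_after card_insert_if)
    (simp add: moved_points_def)

text \<open>The pairs \<open>(p, j)\<close> from which inserting \<open>l+1\<close> after \<open>j\<close> yields a permutation of \<open>[l+1]\<close>
  with \<open>n\<close> moved points and \<open>k\<close> exceedances, split by the role of \<open>j\<close> in \<open>p\<close>. The guards drop
  the components whose indices \<open>n - 2\<close>, \<open>k - 1\<close> would be truncated.\<close>

definition insertion_pairs :: "nat \<Rightarrow> nat \<Rightarrow> nat \<Rightarrow> ((nat \<Rightarrow> nat) \<times> nat) set" where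
  "insertion_pairs l n k =
     Sigma (perms_moved_exc l (n - 1) k) (\<lambda>p. exceedances p l)
     \<union> (if 0 < k then Sigma (perms_moved_exc l (n - 1) (k - 1))
                         (\<lambda>p. moved_points p l - exceedances p l) else {})
     \<union> (if 2 \<le> n \<and> 0 < k then Sigma (perms_moved_exc l (n - 2) (k - 1))
                                  (\<lambda>p. fixed_points p l) else {})"

lemma finite_insertion_pairs: "finite (insertion_pairs l n k)"
  by (simp add: insertion_pairs_def finite_perms_moved_exc)

lemma perms_moved_exc_Suc_subset:
  "perms_moved_exc (Suc l) n k
     \<subseteq> perms_moved_exc l n k \<union> (\<lambda>(p, j). p \<circ> transpose j (Suc l)) ` insertion_pairs l n k"
proof
  fix s assume "s \<in> perms_moved_exc (Suc l) n k"
  then have s: "s permutes {1..Suc l}" "card (moved_points s (Suc l)) = n"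
    "card (exceedances s (Suc l)) = k" by (simp_all add: perms_moved_exc_def)
  show "s \<in> perms_moved_exc l n k \<union> (\<lambda>(p, j). p \<circ> transpose j (Suc l)) ` insertion_pairs l n k"
  proof (cases "s (Suc l) = Suc l")
    case True
    have "s permutes {1..l}"
      by (rule permutes_superset[OF s(1)]) (use True in \<open>auto simp: le_Suc_eq\<close>)
    then show ?thesis
      using s True by (simp add: perms_moved_exc_def moved_points_Suc_fixed exceedances_Suc_fixed)
  next
    case False
    with s(1) obtain p j where p: "p permutes {1..l}" "j \<in> {1..l}"
      and s_eq: "s = p \<circ> transpose j (Suc l)" by (rule perm_decompose_last)
    have n: "n = card (moved_points p l) + (if j \<in> moved_points p l then 1 else 2)"
      and k: "k = card (exceedances p l) + (if j \<in> exceedances p l then 0 else 1)"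
      using s card_insert_after[OF p] by (simp_all add: s_eq)
    consider "j \<in> exceedances p l" | "j \<in> moved_points p l - exceedances p l"
      | "j \<in> fixed_points p l - moved_points p l"
      using p(2) by (auto simp: moved_points_def fixed_points_def)
    then have "(p, j) \<in> insertion_pairs l n k"
    proof cases
      case 1
      moreover have "j \<in> moved_points p l"
        using 1 exceedances_subset_moved_points by blast
      ultimately show ?thesis
        using p(1) n k by (simp add: insertion_pairs_def perms_moved_exc_def)
    next
      case 2
      then show ?thesis
        using p(1) n k by (simp add: insertion_pairs_def perms_moved_exc_def)
    next
      case 3
      moreover have "j \<notin> exceedances p l"
        using 3 exceedances_subset_moved_points by blast
      ultimately show ?thesis
        using p(1) n k by (simp add: insertion_pairs_def perms_moved_exc_def)
    qed
    then show ?thesis by (auto simp: s_eq)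
  qed
qed

lemma card_Sigma_const:
  assumes "finite A" and "\<And>a. a \<in> A \<Longrightarrow> finite (B a)" and "\<And>a. a \<in> A \<Longrightarrow> card (B a) = c"
  shows "card (Sigma A B) = c * card A"
  using assms by simp

lemma card_Sigma_exceedances:
  "card (Sigma (perms_moved_exc l n k) (\<lambda>p. exceedances p l)) = k * card (perms_moved_exc l n k)"
  by (rule card_Sigma_const[OF finite_perms_moved_exc]) (simp_all add: perms_moved_exc_def)

lemma card_Sigma_moved_non_exceedances:
  "card (Sigma (perms_moved_exc l n k) (\<lambda>p. moved_points p l - exceedances p l))
     = (n - k) * card (perms_moved_exc l n k)"
  by (rule card_Sigma_const[OF finite_perms_moved_exc])
    (simp_all add: perms_moved_exc_def card_Diff_subset exceedances_subset_moved_points)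

lemma card_Sigma_fixed_points:
  "card (Sigma (perms_moved_exc l n k) (\<lambda>p. fixed_points p l)) = (l - n) * card (perms_moved_exc l n k)"
  by (rule card_Sigma_const[OF finite_perms_moved_exc])
    (simp_all add: perms_moved_exc_def card_fixed_points)

lemma card_insertion_pairs_le:
  "card (insertion_pairs l n k)
     \<le> k * card (perms_moved_exc l (n - 1) k)
       + (if 0 < k then (n - k) * card (perms_moved_exc l (n - 1) (k - 1)) else 0)
       + (if 2 \<le> n \<and> 0 < k then (l - (n - 2)) * card (perms_moved_exc l (n - 2) (k - 1)) else 0)"
proof -
  have "card (insertion_pairs l n k)
          \<le> card (Sigma (perms_moved_exc l (n - 1) k) (\<lambda>p. exceedances p l))
            + card (if 0 < k then Sigma (perms_moved_exc l (n - 1) (k - 1))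
                                    (\<lambda>p. moved_points p l - exceedances p l) else {})
            + card (if 2 \<le> n \<and> 0 < k then Sigma (perms_moved_exc l (n - 2) (k - 1))
                                             (\<lambda>p. fixed_points p l) else {})"
    unfolding insertion_pairs_def by (rule order_trans[OF card_Un_le add_right_mono[OF card_Un_le]])
  moreover have "n - 1 - (k - 1) = n - k" if "0 < k"
    using that by simp
  ultimately show ?thesis
    by (simp add: card_Sigma_exceedances card_Sigma_moved_non_exceedances card_Sigma_fixed_points
        split: if_splits)
qed

definition recurrence_rhs :: "(nat \<Rightarrow> nat \<Rightarrow> nat) \<Rightarrow> nat \<Rightarrow> nat \<Rightarrow> nat \<Rightarrow> nat" where
  "recurrence_rhs f l n k =
     f n k + k * f (n - 1) k
     + (if 0 < k then (n - k) * f (n - 1) (k - 1) else 0)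
     + (if 2 \<le> n \<and> 0 < k then (l - (n - 2)) * f (n - 2) (k - 1) else 0)"

lemma recurrence_rhs_mono:
  assumes "\<And>n k. f n k \<le> g n k"
  shows "recurrence_rhs f l n k \<le> recurrence_rhs g l n k"
  unfolding recurrence_rhs_def using assms by (intro add_mono) (auto intro: mult_le_mono2)

lemma card_perms_moved_exc_Suc_le:
  "card (perms_moved_exc (Suc l) n k) \<le> recurrence_rhs (\<lambda>n k. card (perms_moved_exc l n k)) l n k"
proof -
  let ?ins = "\<lambda>(p, j). p \<circ> transpose j (Suc l)"
  have "card (perms_moved_exc (Suc l) n k)
          \<le> card (perms_moved_exc l n k \<union> ?ins ` insertion_pairs l n k)"
    by (rule card_mono[OF _ perms_moved_exc_Suc_subset])
      (simp add: finite_perms_moved_exc finite_insertion_pairs)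
  also have "\<dots> \<le> card (perms_moved_exc l n k) + card (insertion_pairs l n k)"
    using card_Un_le[of "perms_moved_exc l n k" "?ins ` insertion_pairs l n k"]
      card_image_le[OF finite_insertion_pairs, of ?ins l n k]
    by linarith
  also have "\<dots> \<le> recurrence_rhs (\<lambda>n k. card (perms_moved_exc l n k)) l n k"
    using card_insertion_pairs_le[of l n k] unfolding recurrence_rhs_def by linarith
  finally show ?thesis .
qed

lemma power_Suc_add_ge: "(a::nat) ^ Suc n + Suc n * d * a ^ n \<le> (a + d) ^ Suc n"
proof (induction n)
  case 0
  then show ?case by simp
next
  case (Suc n)
  have "a ^ Suc (Suc n) + Suc (Suc n) * d * a ^ Suc n
          = a * (a ^ Suc n + Suc n * d * a ^ n) + d * a ^ Suc n"
    by (simp add: algebra_simps)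
  also have "\<dots> \<le> a * (a + d) ^ Suc n + d * (a + d) ^ Suc n"
    using Suc.IH by (intro add_mono mult_le_mono2 power_mono) auto
  also have "\<dots> = (a + d) ^ Suc (Suc n)"
    by (simp add: algebra_simps)
  finally show ?case .
qed

lemma mult_power_Suc_le:
  fixes a c e N :: nat
  assumes "c * a + Suc N \<le> e * (a + 2 * Suc N)"
  shows "c * a ^ Suc N + Suc N * a ^ N \<le> e * (a + 2) ^ Suc N"
proof -
  have "c * a ^ Suc N + Suc N * a ^ N = (c * a + Suc N) * a ^ N"
    by (simp add: algebra_simps)
  also have "\<dots> \<le> e * (a + 2 * Suc N) * a ^ N"
    using assms by (rule mult_le_mono1)
  also have "\<dots> = e * (a ^ Suc N + Suc N * 2 * a ^ N)"
    by (simp add: algebra_simps)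
  also have "\<dots> \<le> e * (a + 2) ^ Suc N"
    using power_Suc_add_ge[of a N 2] by (rule mult_le_mono2)
  finally show ?thesis .
qed

lemma small_k_powers_recurrence:
  assumes "2 \<le> n" and "0 < k"
  shows "k * (2 * k + 3) ^ (n - 1) + (n - k) * (2 * (k - 1) + 3) ^ (n - 1)
           + (n - 1) * (2 * (k - 1) + 3) ^ (n - 2)
         \<le> (2 * k + 3) ^ n"
proof -
  obtain m j where n: "n = Suc (Suc m)" and k: "k = Suc j"
    using assms by (metis add_2_eq_Suc le_Suc_ex gr0_implies_Suc)
  have "(Suc m - j) * (2 * j + 3) \<le> Suc m * (2 * j + 3)"
    by (rule mult_le_mono1) simp
  then have "(Suc m - j) * (2 * j + 3) + Suc m \<le> (j + 4) * (2 * j + 3 + 2 * Suc m)"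
    by (simp add: algebra_simps)
  then have "(Suc m - j) * (2 * j + 3) ^ Suc m + Suc m * (2 * j + 3) ^ m
               \<le> (j + 4) * (2 * j + 3 + 2) ^ Suc m"
    by (rule mult_power_Suc_le)
  moreover have "2 * j + 3 + 2 = 2 * Suc j + 3" by simp
  \<comment> \<open>of the factor \<open>2k+3\<close>, \<open>k\<close> copies absorb the first term and \<open>k+3\<close> the other two\<close>
  moreover have "(2 * Suc j + 3) * X = Suc j * X + (j + 4) * X" for X :: nat
    by (simp add: algebra_simps)
  ultimately have "Suc j * (2 * Suc j + 3) ^ Suc m + (Suc m - j) * (2 * j + 3) ^ Suc m
                     + Suc m * (2 * j + 3) ^ m
                   \<le> (2 * Suc j + 3) ^ Suc (Suc m)"
    by (simp only: power_Suc[of _ "Suc m"])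
  then show ?thesis by (simp add: n k)
qed

lemma large_k_powers_recurrence:
  assumes "2 \<le> n" and "0 < k" and "k < n"
  shows "k * (2 * (n - 1 - k) + 5) ^ (n - 1) + (n - k) * (2 * (n - 1 - (k - 1)) + 5) ^ (n - 1)
           + (n - 1) * (2 * (n - 2 - (k - 1)) + 5) ^ (n - 2)
         \<le> (2 * (n - k) + 5) ^ n"
proof -
  obtain m j where n: "n = Suc (Suc m)" and k: "k = Suc j"
    using assms by (metis add_2_eq_Suc le_Suc_ex gr0_implies_Suc)
  define d where "d = m - j"
  have m: "m = j + d" using assms by (simp add: n k d_def)
  have "Suc j * (2 * d + 5) + Suc m \<le> (d + 6) * (2 * d + 5 + 2 * Suc m)"
    by (simp add: m algebra_simps)
  then have "Suc j * (2 * d + 5) ^ Suc m + Suc m * (2 * d + 5) ^ m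
               \<le> (d + 6) * (2 * d + 5 + 2) ^ Suc m"
    by (rule mult_power_Suc_le)
  moreover have "2 * d + 5 + 2 = 2 * Suc d + 5" by simp
  moreover have "(2 * Suc d + 5) * X = Suc d * X + (d + 6) * X" for X :: nat
    by (simp add: algebra_simps)
  ultimately have "Suc j * (2 * d + 5) ^ Suc m + Suc d * (2 * Suc d + 5) ^ Suc m
                     + Suc m * (2 * d + 5) ^ m
                   \<le> (2 * Suc d + 5) ^ Suc (Suc m)"
    by (simp only: power_Suc[of _ "Suc m"])
  moreover have "j \<le> m" using m by simp
  ultimately show ?thesis by (simp add: n k d_def[symmetric] Suc_diff_le)
qed

text \<open>\<open>theta_min n k\<close> bounds the number of permutations of an \<open>n\<close>-set that move every point and
  have \<open>k\<close> exceedances. Its values for \<open>k = 0\<close> and \<open>k \<ge> n\<close> are exact (only the identity has no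
  exceedance, and the largest moved point is never one); with them the recurrence closes for all
  \<open>n\<close> and \<open>k\<close>.\<close>

definition theta_min :: "nat \<Rightarrow> nat \<Rightarrow> nat" where
  "theta_min n k =
     (if k = 0 then (if n = 0 then 1 else 0)
      else if n \<le> k then 0
      else if k = 1 \<or> k = n - 1 then 1
      else min ((2 * k + 3) ^ n) ((2 * (n - k) + 5) ^ n))"

lemma theta_min_le_powers:
  assumes "0 < k"
  shows "theta_min n k \<le> (2 * k + 3) ^ n" and "theta_min n k \<le> (2 * (n - k) + 5) ^ n"
  using assms by (auto simp: theta_min_def Suc_le_eq)

lemma theta_min_le_theta:
  assumes "0 < k" and "k < n"
  shows "theta_min n k \<le> theta n k"
  using assms by (auto simp: theta_min_def theta_def min_le_iff_disj left_diff_distrib')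

lemma theta_min_recurrence:
  assumes "2 \<le> n" and "0 < k"
  shows "k * theta_min (n - 1) k + (n - k) * theta_min (n - 1) (k - 1)
           + (n - 1) * theta_min (n - 2) (k - 1)
         \<le> theta_min n k"
    (is "?lhs \<le> _")
proof -
  consider "n \<le> k" | "k = 1" | "k = n - 1" | "1 < k" "k < n - 1"
    using assms by linarith
  then show ?thesis
  proof cases
    case 2
    then show ?thesis using assms by (cases "n = 2") (simp_all add: theta_min_def)
  next
    case 4
    have "?lhs \<le> k * (2 * k + 3) ^ (n - 1) + (n - k) * (2 * (k - 1) + 3) ^ (n - 1)
                  + (n - 1) * (2 * (k - 1) + 3) ^ (n - 2)"
      using 4 by (intro add_mono mult_le_mono2 theta_min_le_powers) simp_all
    also have "\<dots> \<le> (2 * k + 3) ^ n"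
      using assms by (rule small_k_powers_recurrence)
    finally have small_k: "?lhs \<le> (2 * k + 3) ^ n" .
    have "?lhs \<le> k * (2 * (n - 1 - k) + 5) ^ (n - 1) + (n - k) * (2 * (n - 1 - (k - 1)) + 5) ^ (n - 1)
                  + (n - 1) * (2 * (n - 2 - (k - 1)) + 5) ^ (n - 2)"
      using 4 by (intro add_mono mult_le_mono2 theta_min_le_powers) simp_all
    also have "\<dots> \<le> (2 * (n - k) + 5) ^ n"
      using assms 4 by (intro large_k_powers_recurrence) simp_all
    finally have large_k: "?lhs \<le> (2 * (n - k) + 5) ^ n" .
    have "theta_min n k = min ((2 * k + 3) ^ n) ((2 * (n - k) + 5) ^ n)"
      using 4 by (simp add: theta_min_def)
    then show ?thesis using small_k large_k by simp
  qed (use assms in \<open>auto simp: theta_min_def\<close>)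
qed

lemma recurrence_rhs_choose_theta_min_le:
  "recurrence_rhs (\<lambda>n k. (l choose n) * theta_min n k) l n k \<le> (Suc l choose n) * theta_min n k"
proof -
  consider "n = 0" | "n = 1" | "2 \<le> n" "k = 0" | "2 \<le> n" "0 < k"
    by linarith
  then show ?thesis
  proof cases
    case 4
    then obtain m where n: "n = Suc (Suc m)" by (metis add_2_eq_Suc le_Suc_ex)
    have "n - 2 = m" "n - 1 = Suc m" by (simp_all add: n)
    then have choose_shift: "(l - (n - 2)) * (l choose (n - 2)) = (n - 1) * (l choose (n - 1))"
      by (simp only: binomial_absorb_comp binomial_absorption)
    have "(l choose n) * theta_min n k + k * ((l choose (n - 1)) * theta_min (n - 1) k)
        + (n - k) * ((l choose (n - 1)) * theta_min (n - 1) (k - 1))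
        + (l - (n - 2)) * ((l choose (n - 2)) * theta_min (n - 2) (k - 1))
      = (l choose n) * theta_min n k + (l choose (n - 1)) * (k * theta_min (n - 1) k
          + (n - k) * theta_min (n - 1) (k - 1) + (n - 1) * theta_min (n - 2) (k - 1))"
      unfolding mult.assoc[symmetric] choose_shift by (simp add: distrib_left ac_simps)
    also have "\<dots> \<le> (l choose n) * theta_min n k + (l choose (n - 1)) * theta_min n k"
      using theta_min_recurrence[OF 4] by (intro add_mono mult_le_mono2) auto
    also have "\<dots> = (Suc l choose n) * theta_min n k"
      by (simp add: n algebra_simps)
    finally show ?thesis using 4 by (simp add: recurrence_rhs_def)
  qed (simp_all add: recurrence_rhs_def theta_min_def)
qed

lemma card_perms_moved_exc_le: "card (perms_moved_exc l n k) \<le> (l choose n) * theta_min n k"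
proof (induction l arbitrary: n k)
  case 0
  show ?case
  proof (cases "perms_moved_exc 0 n k = {}")
    case False
    then have "n = 0" "k = 0"
      by (auto simp: perms_moved_exc_def moved_points_def exceedances_def)
    have "card (perms_moved_exc 0 n k) \<le> card {id :: nat \<Rightarrow> nat}"
      by (rule card_mono) (auto simp: perms_moved_exc_def)
    then show ?thesis by (simp add: \<open>n = 0\<close> \<open>k = 0\<close> theta_min_def)
  qed simp
next
  case (Suc l)
  have "card (perms_moved_exc (Suc l) n k)
          \<le> recurrence_rhs (\<lambda>n k. card (perms_moved_exc l n k)) l n k"
    by (rule card_perms_moved_exc_Suc_le)
  also have "\<dots> \<le> recurrence_rhs (\<lambda>n k. (l choose n) * theta_min n k) l n k"
    using Suc.IH by (rule recurrence_rhs_mono)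
  also have "\<dots> \<le> (Suc l choose n) * theta_min n k"
    by (rule recurrence_rhs_choose_theta_min_le)
  finally show ?case .
qed

lemma S_set_eq_perms_moved_exc:
  assumes "n \<le> l"
  shows "S_set l n k = perms_moved_exc l n k"
proof -
  have le: "card (moved_points s l) \<le> card {1..l}" for s
    by (rule card_mono) (auto simp: moved_points_def)
  have "card (fixed_points s l) = l - n \<longleftrightarrow> card (moved_points s l) = n" for s
    using assms le[of s] by (auto simp: card_fixed_points)
  then show ?thesis by (simp add: S_set_def perms_moved_exc_def)
qed

theorem mainTheorem8:
  fixes l n k :: nat
  assumes "2 \<le> n" and "n \<le> l" and "1 \<le> k" and "k \<le> n - 1"
  shows "card (S_set l n k) \<le> (l choose n) * theta n k"
proof -
  have "card (S_set l n k) \<le> (l choose n) * theta_min n k"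
    using card_perms_moved_exc_le by (simp add: S_set_eq_perms_moved_exc[OF assms(2)])
  also have "\<dots> \<le> (l choose n) * theta n k"
    using assms by (intro mult_le_mono2 theta_min_le_theta) auto
  finally show ?thesis .
qed

end
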